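(* Let $n\ge 1$. It is possible to place $n$ queens on an $n\times n$ symmetric Toeplitz chessboard so that no two queens attack each other if and only if $n \equiv 0$ or $1 \pmod 4$.
   Context: An $n\times n$ symmetric Toeplitz chessboard is one whose square $(i,j)$ ($1\le i,j\le n$) is labeled by a number depending only on $|i-j|$, with distinct values of $|i-j|$ receiving distinct labels (equivalently, square $(i,j)$ is labeled $|i-j|$). Two queens attack each other if they lie in the same row, in the same column, or on squares with the same label. *)

theory Defs
  imports Main
begin

definition toeplitz_label :: "nat \<Rightarrow> nat \<Rightarrow> nat" where
  "toeplitz_label i j = (if i \<le> j then j - i else i - j)"

definition board :: "nat \<Rightarrow> (nat \<times> nat) set" where
  "board n = {1..n} \<times> {1..n}"

definition attacks :: "nat \<times> nat \<Rightarrow> nat \<times> nat \<Rightarrow> bool" where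
  "attacks p q \<longleftrightarrow> fst p = fst q \<or> snd p = snd q
      \<or> toeplitz_label (fst p) (snd p) = toeplitz_label (fst q) (snd q)"

definition nonattacking_queens :: "nat \<Rightarrow> (nat \<times> nat) set \<Rightarrow> bool" where
  "nonattacking_queens n Q \<longleftrightarrow> Q \<subseteq> board n \<and> card Q = n \<and>
      (\<forall>p\<in>Q. \<forall>q\<in>Q. p \<noteq> q \<longrightarrow> \<not> attacks p q)"

end

theory Submission
  imports Defs
begin

text \<open>Necessity is a parity argument. In a nonattacking placement of n queens every row, every
  column and every label 0, ..., n - 1 is used exactly once, so the labels sum to n(n - 1)/2
  while rows and columns each sum to 1 + ... + n. Since |i - j| + i + j = 2 max(i, j), the total
  of the three sums is even; hence n(n - 1)/2 is even, i.e. n \<equiv> 0, 1 (mod 4).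

  Sufficiency is an explicit permutation \<sigma> of {1..n}, made of reversed blocks of about n/4
  rows each. On each block the labels |i - \<sigma> i| form an arithmetic progression of step 2, and
  the blocks are arranged so that these progressions cover the odd and the even labels
  disjointly; thus a label determines its row.\<close>

lemma bij_betw_if_inj_on_card_eq:
  assumes "inj_on f A" "f ` A \<subseteq> B" "finite B" "card A = card B"
  shows "bij_betw f A B"
  using assms card_image card_subset_eq unfolding bij_betw_def by metis

lemma toeplitz_label_add_eq: "toeplitz_label i j + i + j = 2 * max i j"
  by (simp add: toeplitz_label_def max_def)

lemma toeplitz_label_less: "i \<in> {1..n} \<Longrightarrow> j \<in> {1..n} \<Longrightarrow> toeplitz_label i j < n"
  by (auto simp: toeplitz_label_def)

lemma even_sum_lessThan_iff: "even (\<Sum>k<n::nat. k) \<longleftrightarrow> n mod 4 = 0 \<or> n mod 4 = 1"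
proof (induction n)
  case (Suc n)
  have "(\<Sum>k<Suc n. k) = (\<Sum>k<n. k) + n" by simp
  with Suc show ?case by presburger
qed simp

lemma nonattacking_queens_bij_betw:
  assumes "nonattacking_queens n Q"
  shows "bij_betw fst Q {1..n}" "bij_betw snd Q {1..n}"
    and "bij_betw (\<lambda>p. toeplitz_label (fst p) (snd p)) Q {..<n}"
proof -
  have Q: "Q \<subseteq> {1..n} \<times> {1..n}" "card Q = n"
    and eq: "\<And>p q. p \<in> Q \<Longrightarrow> q \<in> Q \<Longrightarrow> attacks p q \<Longrightarrow> p = q"
    using assms unfolding nonattacking_queens_def board_def by auto
  have "inj_on fst Q" "inj_on snd Q" "inj_on (\<lambda>p. toeplitz_label (fst p) (snd p)) Q"
    using eq unfolding inj_on_def attacks_def by blast+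
  moreover have "fst ` Q \<subseteq> {1..n}" "snd ` Q \<subseteq> {1..n}"
    and "(\<lambda>p. toeplitz_label (fst p) (snd p)) ` Q \<subseteq> {..<n}"
    using Q(1) toeplitz_label_less by (force simp: image_subset_iff)+
  ultimately show "bij_betw fst Q {1..n}" "bij_betw snd Q {1..n}"
    and "bij_betw (\<lambda>p. toeplitz_label (fst p) (snd p)) Q {..<n}"
    using Q(2) by (simp_all add: bij_betw_if_inj_on_card_eq)
qed

lemma nonattacking_queens_imp_mod_4:
  assumes "nonattacking_queens n Q"
  shows "n mod 4 = 0 \<or> n mod 4 = 1"
proof -
  note bij = nonattacking_queens_bij_betw[OF assms]
  have "(\<Sum>k<n. k) + 2 * (\<Sum>i = 1..n. i)
      = (\<Sum>p\<in>Q. toeplitz_label (fst p) (snd p)) + (\<Sum>p\<in>Q. fst p) + (\<Sum>p\<in>Q. snd p)"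
    using sum.reindex_bij_betw[OF bij(1), of id] sum.reindex_bij_betw[OF bij(2), of id]
      sum.reindex_bij_betw[OF bij(3), of id] by simp
  also have "\<dots> = 2 * (\<Sum>p\<in>Q. max (fst p) (snd p))"
    by (simp add: toeplitz_label_add_eq sum_distrib_left flip: sum.distrib)
  finally have "even (\<Sum>k<n. k)"
    by (metis dvd_add_left_iff dvd_triv_left)
  then show ?thesis by (simp add: even_sum_lessThan_iff)
qed

lemma nonattacking_queens_graph:
  assumes "bij_betw \<sigma> {1..n} {1..n}"
    and "inj_on (\<lambda>i. toeplitz_label i (\<sigma> i)) {1..n}"
  shows "nonattacking_queens n ((\<lambda>i. (i, \<sigma> i)) ` {1..n})"
  unfolding nonattacking_queens_def
proof (intro conjI ballI impI)
  show "(\<lambda>i. (i, \<sigma> i)) ` {1..n} \<subseteq> board n"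
    using bij_betw_imp_surj_on[OF assms(1)] by (auto simp: board_def)
  show "card ((\<lambda>i. (i, \<sigma> i)) ` {1..n}) = n"
    by (simp add: card_image inj_on_def)
  fix p q assume "p \<in> (\<lambda>i. (i, \<sigma> i)) ` {1..n}" "q \<in> (\<lambda>i. (i, \<sigma> i)) ` {1..n}" "p \<noteq> q"
  then obtain i j where "i \<in> {1..n}" "j \<in> {1..n}" "i \<noteq> j" "p = (i, \<sigma> i)" "q = (j, \<sigma> j)"
    by blast
  with bij_betw_imp_inj_on[OF assms(1)] assms(2) show "\<not> attacks p q"
    unfolding attacks_def by (auto dest: inj_onD)
qed

definition queen_col_4m :: "nat \<Rightarrow> nat \<Rightarrow> nat" where
  "queen_col_4m m i =
    (if i \<le> m then 4*m + 1 - i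
     else if i < 2*m then 4*m - i
     else if i < 3*m then 4*m - 1 - i
     else if i = 3*m then 3*m
     else if i < 4*m then 4*m - i
     else 2*m)"

definition label_row_4m :: "nat \<Rightarrow> nat \<Rightarrow> nat" where
  "label_row_4m m d =
    (if d = 0 then 3*m
     else if odd d then (if 2*m < d then 2*m - d div 2 else 2*m + d div 2)
     else if d < 2*m then 2*m - d div 2
     else if d = 2*m then 4*m
     else 2*m + d div 2)"

lemma label_row_4m_toeplitz_label:
  assumes "i \<in> {1..4*m}"
  shows "label_row_4m m (toeplitz_label i (queen_col_4m m i)) = i"
proof -
  consider "i \<le> m" | "m < i" "i < 2*m" | "2*m \<le> i" "i < 3*m" | "i = 3*m"
    | "3*m < i" "i < 4*m" | "i = 4*m"
    using assms by fastforce
  then show ?thesis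
  proof cases
    case 1
    then have "toeplitz_label i (queen_col_4m m i) = 2*(2*m - i) + 1"
      using assms by (auto simp: queen_col_4m_def toeplitz_label_def)
    with 1 show ?thesis by (auto simp: label_row_4m_def)
  next
    case 2
    then have "toeplitz_label i (queen_col_4m m i) = 2*(2*m - i)"
      using assms by (auto simp: queen_col_4m_def toeplitz_label_def)
    with 2 show ?thesis by (auto simp: label_row_4m_def)
  next
    case 3
    then have "toeplitz_label i (queen_col_4m m i) = 2*(i - 2*m) + 1"
      using assms by (auto simp: queen_col_4m_def toeplitz_label_def)
    with 3 show ?thesis by (auto simp: label_row_4m_def)
  next
    case 4
    then show ?thesis by (simp add: queen_col_4m_def toeplitz_label_def label_row_4m_def)
  next
    case 5
    then have "toeplitz_label i (queen_col_4m m i) = 2*(i - 2*m)"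
      using assms by (auto simp: queen_col_4m_def toeplitz_label_def)
    with 5 show ?thesis by (auto simp: label_row_4m_def)
  next
    case 6
    then show ?thesis using assms by (simp add: queen_col_4m_def toeplitz_label_def label_row_4m_def)
  qed
qed
definition queen_col_4m_plus_1 :: "nat \<Rightarrow> nat \<Rightarrow> nat" where
  "queen_col_4m_plus_1 m i =
    (if i \<le> m then 4*m + 2 - i
     else if i \<le> 2*m then 4*m + 1 - i
     else if i \<le> 3*m then 4*m - i
     else if i = 3*m + 1 then 3*m + 1
     else if i \<le> 4*m then 4*m + 1 - i
     else 2*m)"

definition label_row_4m_plus_1 :: "nat \<Rightarrow> nat \<Rightarrow> nat" where
  "label_row_4m_plus_1 m d =
    (if d = 0 then 3*m + 1
     else if odd d then (if d < 2*m then 2*m - d div 2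
                         else if d = 2*m + 1 then 4*m + 1
                         else 2*m + 1 + d div 2)
     else if 2*m < d then 2*m + 1 - d div 2
     else 2*m + d div 2)"

lemma label_row_4m_plus_1_toeplitz_label:
  assumes "i \<in> {1..4*m+1}"
  shows "label_row_4m_plus_1 m (toeplitz_label i (queen_col_4m_plus_1 m i)) = i"
proof -
  consider "i \<le> m" | "m < i" "i \<le> 2*m" | "2*m < i" "i \<le> 3*m" | "i = 3*m + 1"
    | "3*m + 1 < i" "i \<le> 4*m" | "i = 4*m + 1"
    using assms by fastforce
  then show ?thesis
  proof cases
    case 1
    then have "toeplitz_label i (queen_col_4m_plus_1 m i) = 2*(2*m + 1 - i)"
      using assms by (auto simp: queen_col_4m_plus_1_def toeplitz_label_def)
    with 1 show ?thesis by (auto simp: label_row_4m_plus_1_def)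
  next
    case 2
    then have "toeplitz_label i (queen_col_4m_plus_1 m i) = 2*(2*m - i) + 1"
      using assms by (auto simp: queen_col_4m_plus_1_def toeplitz_label_def)
    with 2 show ?thesis by (auto simp: label_row_4m_plus_1_def)
  next
    case 3
    then have "toeplitz_label i (queen_col_4m_plus_1 m i) = 2*(i - 2*m)"
      using assms by (auto simp: queen_col_4m_plus_1_def toeplitz_label_def)
    with 3 show ?thesis by (auto simp: label_row_4m_plus_1_def)
  next
    case 4
    then show ?thesis
      by (simp add: queen_col_4m_plus_1_def toeplitz_label_def label_row_4m_plus_1_def)
  next
    case 5
    then have "toeplitz_label i (queen_col_4m_plus_1 m i) = 2*(i - 2*m - 1) + 1"
      using assms by (auto simp: queen_col_4m_plus_1_def toeplitz_label_def)
    with 5 show ?thesis by (auto simp: label_row_4m_plus_1_def)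
  next
    case 6
    then show ?thesis
      by (simp add: queen_col_4m_plus_1_def toeplitz_label_def label_row_4m_plus_1_def)
  qed
qed


lemma bij_betw_queen_col_4m: "bij_betw (queen_col_4m m) {1..4*m} {1..4*m}"
  by (rule bij_betw_if_inj_on_card_eq) (auto simp: queen_col_4m_def inj_on_def split: if_split_asm)

lemma bij_betw_queen_col_4m_plus_1: "bij_betw (queen_col_4m_plus_1 m) {1..4*m+1} {1..4*m+1}"
  by (rule bij_betw_if_inj_on_card_eq)
    (auto simp: queen_col_4m_plus_1_def inj_on_def split: if_split_asm)

lemma nonattacking_queens_4m:
  "nonattacking_queens (4*m) ((\<lambda>i. (i, queen_col_4m m i)) ` {1..4*m})"
proof (rule nonattacking_queens_graph)
  show "inj_on (\<lambda>i. toeplitz_label i (queen_col_4m m i)) {1..4*m}"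
    by (rule inj_on_inverseI[where g = "label_row_4m m"]) (rule label_row_4m_toeplitz_label)
qed (rule bij_betw_queen_col_4m)

lemma nonattacking_queens_4m_plus_1:
  "nonattacking_queens (4*m+1) ((\<lambda>i. (i, queen_col_4m_plus_1 m i)) ` {1..4*m+1})"
proof (rule nonattacking_queens_graph)
  show "inj_on (\<lambda>i. toeplitz_label i (queen_col_4m_plus_1 m i)) {1..4*m+1}"
    by (rule inj_on_inverseI[where g = "label_row_4m_plus_1 m"]) (rule label_row_4m_plus_1_toeplitz_label)
qed (rule bij_betw_queen_col_4m_plus_1)

lemma nonattacking_queens_exists_iff:
  "(\<exists>Q. nonattacking_queens n Q) \<longleftrightarrow> n mod 4 = 0 \<or> n mod 4 = 1"
proof
  assume "n mod 4 = 0 \<or> n mod 4 = 1"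
  moreover have "n = 4 * (n div 4) + n mod 4" by simp
  ultimately show "\<exists>Q. nonattacking_queens n Q"
    by (metis add_0_right nonattacking_queens_4m nonattacking_queens_4m_plus_1)
qed (auto dest: nonattacking_queens_imp_mod_4)

theorem corollary2:
  fixes n :: nat
  assumes "n \<ge> 1"
  shows "(\<exists>Q. nonattacking_queens n Q) \<longleftrightarrow> (n mod 4 = 0 \<or> n mod 4 = 1)"
  by (rule nonattacking_queens_exists_iff)

end
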